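(* Let $(p,\mathcal D,L)$ be a Hadamard triple on $\mathbb R$ with $p>1$, $0\in\mathcal D\subset\{0,1,2,\dots\}$ and $0\in L\subset\{0,1,\dots,p-1\}$. Then $(p,\mathcal D)$ satisfies DPC if and only if $p>\#\mathcal D$.
   Context: A Hadamard triple on $\mathbb R$ is a triple $(p,\mathcal D,L)$ with $p>1$ an integer, $\mathcal D,L\subset\mathbb Z$ finite with $\#\mathcal D=\#L$, such that $\frac{1}{\sqrt{\#\mathcal D}}\big[e^{2\pi i d\ell/p}\big]_{\ell\in L,d\in\mathcal D}$ is unitary. For finite $A\subset\mathbb R$, $\widehat{\delta_{cA}}(\xi)=\frac1{\#A}\sum_{a\in A}e^{2\pi i ca\xi}$. $T_{p,D}$ denotes the set of $\xi\in[0,1)$ for which there exist distinct $\ell_1,\ell_2\in\{0,\dots,p-1\}$ with $\widehat{\delta_{p^{-1}D}}(\xi+\ell_i)\ne0$, $i=1,2$; $(p,D)$ satisfies the Double Points Condition (DPC) if $T_{p,D}=[0,1)$. *)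

theory Defs
  imports "HOL-Analysis.Analysis"
begin

definition hmat_entry :: "int \<Rightarrow> int \<Rightarrow> int \<Rightarrow> complex" where
  "hmat_entry p l d = cis (2 * pi * real_of_int d * real_of_int l / real_of_int p)"

text \<open>Hadamard triple: p > 1, D, L finite subsets of Z, #D = #L, and the matrix
  M = (1/sqrt #D) [e^{2 pi i d l / p}]_{l in L, d in D} is unitary, i.e.
  M M^* = I (indexed by L) and M^* M = I (indexed by D), written out entrywise.\<close>
definition hadamard_triple :: "int \<Rightarrow> int set \<Rightarrow> int set \<Rightarrow> bool" where
  "hadamard_triple p D L \<longleftrightarrow>
     p > 1 \<and> finite D \<and> finite L \<and> card D = card L \<and>
     (\<forall>l1\<in>L. \<forall>l2\<in>L.
        (\<Sum>d\<in>D. (hmat_entry p l1 d / sqrt (real (card D))) *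
                  cnj (hmat_entry p l2 d / sqrt (real (card D))))
        = (if l1 = l2 then 1 else 0)) \<and>
     (\<forall>d1\<in>D. \<forall>d2\<in>D.
        (\<Sum>l\<in>L. cnj (hmat_entry p l d1 / sqrt (real (card D))) *
                  (hmat_entry p l d2 / sqrt (real (card D))))
        = (if d1 = d2 then 1 else 0))"

text \<open>Fourier transform of the uniform discrete measure on cA:
  (1/#A) sum_{a in A} e^{2 pi i c a xi}.\<close>
definition delta_hat :: "real \<Rightarrow> int set \<Rightarrow> real \<Rightarrow> complex" where
  "delta_hat c A \<xi> = (1 / of_nat (card A)) * (\<Sum>a\<in>A. cis (2 * pi * c * real_of_int a * \<xi>))"

definition T_set :: "int \<Rightarrow> int set \<Rightarrow> real set" where
  "T_set p D = {\<xi> \<in> {0..<1}. \<exists>l1 l2. l1 \<in> {0..p-1} \<and> l2 \<in> {0..p-1} \<and> l1 \<noteq> l2 \<and>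
      delta_hat (1 / real_of_int p) D (\<xi> + real_of_int l1) \<noteq> 0 \<and>
      delta_hat (1 / real_of_int p) D (\<xi> + real_of_int l2) \<noteq> 0}"

definition DPC :: "int \<Rightarrow> int set \<Rightarrow> bool" where
  "DPC p D \<longleftrightarrow> T_set p D = {0..<1}"

end

theory Submission
  imports Defs "HOL-Library.Real_Mod"
begin

text \<open>Let \<open>A(x) = \<Sum>\<^sub>d\<^sub>\<in>\<^sub>D e(d x / p)\<close>, so that \<open>\<delta>\<^sub>D(x) = A(x) / #D\<close>. Column orthogonality of the
  Hadamard matrix makes the elements of \<open>D\<close> pairwise incongruent mod \<open>p\<close>, and summing the
  characters of \<open>\<int>/p\<close> then gives the Parseval identity \<open>\<Sum>\<^sub>l\<^sub><\<^sub>p |A(\<xi> + l)|\<^sup>2 = p #D\<close>.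
  As \<open>|A| \<le> #D\<close>, at least \<open>p / #D\<close> of the values \<open>A(\<xi> + l)\<close> are nonzero, so DPC holds once
  \<open>p > #D\<close>. Conversely, if \<open>p \<le> #D = #L\<close> then \<open>L = {0..p-1}\<close>, and orthogonality of each row
  to the row of \<open>0 \<in> L\<close> makes \<open>A(l)\<close> vanish for all \<open>l \<noteq> 0\<close>: the point \<open>0\<close> is not a double point.\<close>

definition char_sum :: "int \<Rightarrow> int set \<Rightarrow> real \<Rightarrow> complex" where
  "char_sum p D x = (\<Sum>d\<in>D. cis (2 * pi * real_of_int d * x / real_of_int p))"

lemma delta_hat_eq_char_sum:
  "delta_hat (1 / real_of_int p) D x = char_sum p D x / of_nat (card D)"
  unfolding delta_hat_def char_sum_def by (simp add: field_simps)

lemma norm_char_sum_le: "norm (char_sum p D x) \<le> real (card D)"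
proof -
  have "norm (char_sum p D x) \<le> (\<Sum>d\<in>D. norm (cis (2 * pi * real_of_int d * x / real_of_int p)))"
    unfolding char_sum_def by (rule norm_sum)
  then show ?thesis by simp
qed

lemma cis_eq_1_iff_dvd:
  fixes p k :: int
  assumes "p > 0"
  shows "cis (2 * pi * real_of_int k / real_of_int p) = 1 \<longleftrightarrow> p dvd k"
proof -
  have "2 * pi * real_of_int k / real_of_int p = real_of_int n * (2 * pi) \<longleftrightarrow> k = n * p" for n
  proof -
    have "2 * pi * real_of_int k / real_of_int p = real_of_int n * (2 * pi)
          \<longleftrightarrow> real_of_int k = real_of_int (n * p)"
      using assms by (auto simp: field_simps)
    then show ?thesis by linarith
  qed
  then show ?thesis by (auto simp: cis_eq_1_iff dvd_def mult.commute)
qed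

lemma sum_roots_of_unity:
  fixes p k :: int
  assumes "p > 0"
  shows "(\<Sum>l\<in>{0..p-1}. cis (2 * pi * real_of_int k * real_of_int l / real_of_int p))
         = (if p dvd k then of_int p else 0)"
proof -
  define z where "z = cis (2 * pi * real_of_int k / real_of_int p)"
  have "{0..p-1} = int ` {..<nat p}"
    using assms by (auto simp: image_iff intro!: bexI[of _ "nat x" for x])
  moreover have "cis (2 * pi * real_of_int k * real j / real_of_int p) = z ^ j" for j :: nat
    unfolding z_def Complex.DeMoivre by (simp add: mult_ac)
  ultimately have "(\<Sum>l\<in>{0..p-1}. cis (2 * pi * real_of_int k * real_of_int l / real_of_int p))
           = (\<Sum>j<nat p. z ^ j)"
    by (simp add: sum.reindex)
  moreover have "z ^ nat p = 1"
    using assms by (simp add: z_def Complex.DeMoivre cis_eq_1_iff)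
  moreover have "z = 1 \<longleftrightarrow> p dvd k"
    unfolding z_def using assms by (rule cis_eq_1_iff_dvd)
  ultimately show ?thesis
    using assms by (auto simp: sum_gp_strict)
qed

lemma hmat_entry_row_product:
  "hmat_entry p l1 d / complex_of_real (sqrt (real n))
     * cnj (hmat_entry p l2 d / complex_of_real (sqrt (real n)))
   = cis (2 * pi * real_of_int d * real_of_int (l1 - l2) / real_of_int p) / of_nat n"
proof -
  have "complex_of_real (sqrt (real n)) * complex_of_real (sqrt (real n)) = of_nat n"
    by (simp flip: of_real_mult)
  then show ?thesis
    by (simp add: hmat_entry_def cis_cnj cis_mult diff_divide_distrib algebra_simps)
qed

lemma hmat_entry_column_product:
  "cnj (hmat_entry p l d1 / complex_of_real (sqrt (real n)))
     * (hmat_entry p l d2 / complex_of_real (sqrt (real n)))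
   = cis (2 * pi * real_of_int (d2 - d1) * real_of_int l / real_of_int p) / of_nat n"
proof -
  have "complex_of_real (sqrt (real n)) * complex_of_real (sqrt (real n)) = of_nat n"
    by (simp flip: of_real_mult)
  then show ?thesis
    by (simp add: hmat_entry_def cis_cnj cis_mult diff_divide_distrib algebra_simps)
qed

lemma hadamard_triple_row_orthogonal:
  assumes H: "hadamard_triple p D L" and "l1 \<in> L" "l2 \<in> L" "l1 \<noteq> l2"
  shows "char_sum p D (real_of_int (l1 - l2)) = 0"
proof -
  from H have "finite D"
    by (simp add: hadamard_triple_def)
  from H assms(2,3) have "(\<Sum>d\<in>D. hmat_entry p l1 d / complex_of_real (sqrt (real (card D)))
      * cnj (hmat_entry p l2 d / complex_of_real (sqrt (real (card D))))) = (if l1 = l2 then 1 else 0)"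
    unfolding hadamard_triple_def by blast
  then have "char_sum p D (real_of_int (l1 - l2)) / of_nat (card D) = 0"
    using \<open>l1 \<noteq> l2\<close> by (simp only: hmat_entry_row_product char_sum_def sum_divide_distrib if_False)
  with \<open>finite D\<close> show ?thesis
    by (cases "D = {}") (simp_all add: char_sum_def)
qed

lemma hadamard_triple_incongruent:
  assumes H: "hadamard_triple p D L" and "d1 \<in> D" "d2 \<in> D" "p dvd (d1 - d2)"
  shows "d1 = d2"
proof (rule ccontr)
  assume "d1 \<noteq> d2"
  from H have "p > 0" "finite D" "card L = card D"
    by (simp_all add: hadamard_triple_def)
  from H assms(2,3)
  have "(\<Sum>l\<in>L. cnj (hmat_entry p l d1 / complex_of_real (sqrt (real (card D))))
      * (hmat_entry p l d2 / complex_of_real (sqrt (real (card D))))) = (if d1 = d2 then 1 else 0)"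
    unfolding hadamard_triple_def by blast
  then have orth: "(\<Sum>l\<in>L. cis (2 * pi * real_of_int (d2 - d1) * real_of_int l / real_of_int p)
                      / of_nat (card D)) = 0"
    using \<open>d1 \<noteq> d2\<close> by (simp only: hmat_entry_column_product if_False)
  have "cis (2 * pi * real_of_int (d2 - d1) * real_of_int l / real_of_int p) = 1" for l
    using cis_eq_1_iff_dvd[OF \<open>p > 0\<close>, of "(d2 - d1) * l"] \<open>p dvd (d1 - d2)\<close>
    by (simp add: dvd_diff_commute mult.assoc)
  then have "(\<Sum>l\<in>L. cis (2 * pi * real_of_int (d2 - d1) * real_of_int l / real_of_int p)
                / of_nat (card D)) = of_nat (card L) / of_nat (card D)"
    by simp
  also have "\<dots> = 1"
    using \<open>card L = card D\<close> \<open>finite D\<close> \<open>d1 \<in> D\<close> by (auto simp: card_gt_0_iff)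
  finally show False
    using orth by simp
qed

lemma norm_char_sum_square:
  "complex_of_real ((norm (char_sum p D x))\<^sup>2)
   = (\<Sum>d\<in>D. \<Sum>d'\<in>D. cis (2 * pi * real_of_int (d - d') * x / real_of_int p))"
  unfolding complex_norm_square char_sum_def cnj_sum sum_product
  by (intro sum.cong refl) (simp add: cis_cnj cis_mult diff_divide_distrib algebra_simps)

lemma char_sum_parseval:
  fixes \<xi> :: real
  assumes "p > 0"
    and incongruent: "\<And>d1 d2. d1 \<in> D \<Longrightarrow> d2 \<in> D \<Longrightarrow> p dvd (d1 - d2) \<Longrightarrow> d1 = d2"
  shows "(\<Sum>l\<in>{0..p-1}. (norm (char_sum p D (\<xi> + real_of_int l)))\<^sup>2) = real_of_int p * real (card D)"
proof -
  let ?e = "\<lambda>k x. cis (2 * pi * real_of_int k * x / real_of_int p)"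
  have split: "?e k (\<xi> + real_of_int l) = ?e k \<xi> * ?e k (real_of_int l)" for k l
    by (simp add: cis_mult add_divide_distrib algebra_simps)
  have "complex_of_real (\<Sum>l\<in>{0..p-1}. (norm (char_sum p D (\<xi> + real_of_int l)))\<^sup>2)
        = (\<Sum>d\<in>D. \<Sum>d'\<in>D. ?e (d - d') \<xi> * (\<Sum>l\<in>{0..p-1}. ?e (d - d') (real_of_int l)))"
    unfolding of_real_sum norm_char_sum_square split sum_distrib_left
    by (subst sum.swap, rule sum.cong, rule refl, subst sum.swap, rule refl)
  also have "\<dots> = (\<Sum>d\<in>D. \<Sum>d'\<in>D. if d' = d then of_int p else 0)"
  proof (intro sum.cong refl)
    fix d d' assume "d \<in> D" "d' \<in> D"
    then show "?e (d - d') \<xi> * (\<Sum>l\<in>{0..p-1}. ?e (d - d') (real_of_int l))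
               = (if d' = d then of_int p else 0)"
      using sum_roots_of_unity[OF \<open>p > 0\<close>, of "d - d'"] incongruent by auto
  qed
  also have "\<dots> = complex_of_real (real_of_int p * real (card D))"
    by (cases "finite D") simp_all
  finally show ?thesis
    by (simp only: of_real_eq_iff)
qed

lemma card_nonvanishing_char_sum:
  fixes \<xi> :: real
  assumes "p > 0" "finite D" "D \<noteq> {}"
    and "\<And>d1 d2. d1 \<in> D \<Longrightarrow> d2 \<in> D \<Longrightarrow> p dvd (d1 - d2) \<Longrightarrow> d1 = d2"
  shows "real_of_int p \<le> real (card {l \<in> {0..p-1}. char_sum p D (\<xi> + real_of_int l) \<noteq> 0}) * real (card D)"
    (is "_ \<le> real (card ?S) * _")
proof -
  have "real_of_int p * real (card D) = (\<Sum>l\<in>{0..p-1}. (norm (char_sum p D (\<xi> + real_of_int l)))\<^sup>2)"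
    using assms by (simp add: char_sum_parseval)
  also have "\<dots> = (\<Sum>l\<in>?S. (norm (char_sum p D (\<xi> + real_of_int l)))\<^sup>2)"
    by (rule sum.mono_neutral_right) auto
  also have "\<dots> \<le> real (card ?S) * (real (card D))\<^sup>2"
    by (intro sum_bounded_above power_mono norm_char_sum_le) simp
  finally show ?thesis
    using assms(2,3) by (simp add: power2_eq_square card_gt_0_iff)
qed

lemma DPC_imp_card_less:
  assumes H: "hadamard_triple p D L" and "0 \<in> L" "L \<subseteq> {0..p-1}" and "DPC p D"
  shows "int (card D) < p"
proof (rule ccontr)
  assume "\<not> int (card D) < p"
  moreover have "card L = card D"
    using H by (simp add: hadamard_triple_def)
  moreover have "card L \<le> card {0..p-1}"
    using \<open>L \<subseteq> {0..p-1}\<close> by (intro card_mono) simp_all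
  ultimately have "L = {0..p-1}"
    using \<open>L \<subseteq> {0..p-1}\<close> by (intro card_subset_eq) auto
  have vanish: "delta_hat (1 / real_of_int p) D (0 + real_of_int l) = 0"
    if "l \<in> {0..p-1}" "l \<noteq> 0" for l
    using hadamard_triple_row_orthogonal[OF H, of l 0] that \<open>0 \<in> L\<close> \<open>L = {0..p-1}\<close>
    by (simp add: delta_hat_eq_char_sum)
  have "(0::real) \<in> T_set p D"
    using \<open>DPC p D\<close> by (simp add: DPC_def)
  then obtain l1 l2 where "l1 \<in> {0..p-1}" "l2 \<in> {0..p-1}" "l1 \<noteq> l2"
    and "delta_hat (1 / real_of_int p) D (0 + real_of_int l1) \<noteq> 0"
    and "delta_hat (1 / real_of_int p) D (0 + real_of_int l2) \<noteq> 0"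
    unfolding T_set_def by blast
  with vanish show False
    by metis
qed

lemma card_less_imp_DPC:
  assumes "p > 0" "finite D" "D \<noteq> {}"
    and "\<And>d1 d2. d1 \<in> D \<Longrightarrow> d2 \<in> D \<Longrightarrow> p dvd (d1 - d2) \<Longrightarrow> d1 = d2"
    and "int (card D) < p"
  shows "DPC p D"
  unfolding DPC_def
proof (intro equalityI subsetI)
  fix \<xi> :: real
  assume "\<xi> \<in> {0..<1}"
  let ?S = "{l \<in> {0..p-1}. char_sum p D (\<xi> + real_of_int l) \<noteq> 0}"
  have "real_of_int p \<le> real (card ?S) * real (card D)"
    using assms by (intro card_nonvanishing_char_sum)
  have "\<not> card ?S \<le> Suc 0"
  proof
    assume "card ?S \<le> Suc 0"
    then have "real (card ?S) * real (card D) \<le> real (card D)"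
      by (intro mult_left_le_one_le) simp_all
    with \<open>real_of_int p \<le> real (card ?S) * real (card D)\<close> \<open>int (card D) < p\<close> show False
      by linarith
  qed
  moreover have "finite ?S"
    by (rule finite_subset[of _ "{0..p-1}"]) auto
  ultimately obtain l1 l2 where "l1 \<in> ?S" "l2 \<in> ?S" "l1 \<noteq> l2"
    using card_le_Suc0_iff_eq by blast
  with \<open>\<xi> \<in> {0..<1}\<close> assms(2,3) show "\<xi> \<in> T_set p D"
    unfolding T_set_def by (auto simp: delta_hat_eq_char_sum)
qed (simp add: T_set_def)

theorem lemma3p2:
  fixes p :: int and D L :: "int set"
  assumes "hadamard_triple p D L"
    and "p > 1"
    and "0 \<in> D" and "D \<subseteq> {0..}"
    and "0 \<in> L" and "L \<subseteq> {0..p-1}"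
  shows "DPC p D \<longleftrightarrow> p > int (card D)"
proof
  assume "DPC p D"
  with assms show "p > int (card D)"
    by (intro DPC_imp_card_less)
next
  assume "p > int (card D)"
  moreover have "finite D"
    using assms(1) by (simp add: hadamard_triple_def)
  moreover note hadamard_triple_incongruent[OF assms(1)]
  ultimately show "DPC p D"
    using assms(2,3) by (intro card_less_imp_DPC) auto
qed

end
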